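(* A Markov category $\mathcal C$ is positive if and only if for every object $X$ the copy morphism $\mathrm{copy}_X$ is an initial dilation of $\mathrm{id}_X$ and the class of deterministic morphisms of $\mathcal C$ coincides with the class of non-creative morphisms of $\mathcal C$.
   Context: A Markov category is a symmetric monoidal category $(\mathcal C,\otimes,I)$ with commutative comonoids $\mathrm{copy}_X\colon X\to X\otimes X$, $\mathrm{del}_X\colon X\to I$ compatible with $\otimes$, with $I$ terminal. $f\colon A\to X$ is deterministic if $\mathrm{copy}_X\circ f=(f\otimes f)\circ\mathrm{copy}_A$. $\mathcal C$ is positive if for all $f\colon X\to Y$, $g\colon Y\to Z$ with $g\circ f$ deterministic, $(\mathrm{id}_Y\otimes g)\circ\mathrm{copy}_Y\circ f=(f\otimes (g\circ f))\circ\mathrm{copy}_X$. A dilation of $p\colon A\to X$ is $\pi\colon A\to X\otimes E$ with $(\mathrm{id}_X\otimes\mathrm{del}_E)\circ\pi=p$. For a dilation $\pi\colon A\to X\otimes E$ and $f_1,f_2\colon E\to E'$, these are $\pi$-dilationally equal if for every dilation $\rho\colon A\to X\otimes E\otimes F$ of $\pi$, $(\mathrm{id}_X\otimes f_1\otimes\mathrm{id}_F)\circ\rho=(\mathrm{id}_X\otimes f_2\otimes\mathrm{id}_F)\circ\rho$. A dilation $\pi\colon A\to X\otimes E$ of $p$ is initial if for every dilation $\pi'\colon A\to X\otimes E'$ of $p$ there is $f\colon E\to E'$ with $(\mathrm{id}_X\otimes f)\circ\pi=\pi'$, unique up to $\pi$-dilational equality. A morphism $p\colon A\to X$ is non-creative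 if every dilation $\pi\colon A\to X\otimes E$ of $p$ equals $(p\otimes\mathrm{id}_E)\circ\iota$ for some dilation $\iota\colon A\to A\otimes E$ of $\mathrm{id}_A$. *)

theory Defs
  imports Main
begin

text \<open>A (possibly non-strict) symmetric monoidal category with chosen comonoids,
  given by its data. Composition is written  mc_comp C g f  for g after f.\<close>

record ('o, 'm) mcat =
  mc_Ob :: "'o set"
  mc_Ar :: "'m set"
  mc_src :: "'m \<Rightarrow> 'o"
  mc_tgt :: "'m \<Rightarrow> 'o"
  mc_comp :: "'m \<Rightarrow> 'm \<Rightarrow> 'm"
  mc_id :: "'o \<Rightarrow> 'm"
  mc_otens :: "'o \<Rightarrow> 'o \<Rightarrow> 'o"
  mc_mtens :: "'m \<Rightarrow> 'm \<Rightarrow> 'm"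
  mc_unit :: "'o"
  mc_alpha :: "'o \<Rightarrow> 'o \<Rightarrow> 'o \<Rightarrow> 'm"
  mc_alpha_inv :: "'o \<Rightarrow> 'o \<Rightarrow> 'o \<Rightarrow> 'm"
  mc_lam :: "'o \<Rightarrow> 'm"
  mc_rho :: "'o \<Rightarrow> 'm"
  mc_sigma :: "'o \<Rightarrow> 'o \<Rightarrow> 'm"
  mc_copy :: "'o \<Rightarrow> 'm"
  mc_del :: "'o \<Rightarrow> 'm"

definition mhom :: "('o, 'm) mcat \<Rightarrow> 'o \<Rightarrow> 'o \<Rightarrow> 'm set" where
  "mhom C X Y = {f \<in> mc_Ar C. mc_src C f = X \<and> mc_tgt C f = Y}"

definition is_category :: "('o, 'm) mcat \<Rightarrow> bool" where
  "is_category C \<longleftrightarrow>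
     (\<forall>f\<in>mc_Ar C. mc_src C f \<in> mc_Ob C \<and> mc_tgt C f \<in> mc_Ob C) \<and>
     (\<forall>X\<in>mc_Ob C. mc_id C X \<in> mhom C X X) \<and>
     (\<forall>f\<in>mc_Ar C. \<forall>g\<in>mc_Ar C. mc_tgt C f = mc_src C g \<longrightarrow>
         mc_comp C g f \<in> mhom C (mc_src C f) (mc_tgt C g)) \<and>
     (\<forall>f\<in>mc_Ar C. mc_comp C (mc_id C (mc_tgt C f)) f = f \<and>
                   mc_comp C f (mc_id C (mc_src C f)) = f) \<and>
     (\<forall>f\<in>mc_Ar C. \<forall>g\<in>mc_Ar C. \<forall>h\<in>mc_Ar C.
         mc_tgt C f = mc_src C g \<and> mc_tgt C g = mc_src C h \<longrightarrow>
         mc_comp C h (mc_comp C g f) = mc_comp C (mc_comp C h g) f)"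

definition is_iso :: "('o, 'm) mcat \<Rightarrow> 'm \<Rightarrow> bool" where
  "is_iso C f \<longleftrightarrow> f \<in> mc_Ar C \<and>
     (\<exists>g \<in> mhom C (mc_tgt C f) (mc_src C f).
        mc_comp C g f = mc_id C (mc_src C f) \<and> mc_comp C f g = mc_id C (mc_tgt C f))"

definition is_symmetric_monoidal :: "('o, 'm) mcat \<Rightarrow> bool" where
  "is_symmetric_monoidal C \<longleftrightarrow> is_category C \<and>
   (let Ob = mc_Ob C; Ar = mc_Ar C; s = mc_src C; t = mc_tgt C; c = mc_comp C;
        i = mc_id C; T = mc_otens C; M = mc_mtens C; I = mc_unit C;
        a = mc_alpha C; ai = mc_alpha_inv C; l = mc_lam C; r = mc_rho C; sg = mc_sigma C in
     I \<in> Ob \<and>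
     (\<forall>X\<in>Ob. \<forall>Y\<in>Ob. T X Y \<in> Ob) \<and>
     (\<forall>f\<in>Ar. \<forall>g\<in>Ar. M f g \<in> mhom C (T (s f) (s g)) (T (t f) (t g))) \<and>
     (\<forall>X\<in>Ob. \<forall>Y\<in>Ob. M (i X) (i Y) = i (T X Y)) \<and>
     (\<forall>f\<in>Ar. \<forall>g\<in>Ar. \<forall>f'\<in>Ar. \<forall>g'\<in>Ar. t f = s g \<and> t f' = s g' \<longrightarrow>
         M (c g f) (c g' f') = c (M g g') (M f f')) \<and>
     (\<forall>X\<in>Ob. \<forall>Y\<in>Ob. \<forall>Z\<in>Ob.
         a X Y Z \<in> mhom C (T (T X Y) Z) (T X (T Y Z)) \<and>
         ai X Y Z \<in> mhom C (T X (T Y Z)) (T (T X Y) Z) \<and>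
         c (ai X Y Z) (a X Y Z) = i (T (T X Y) Z) \<and>
         c (a X Y Z) (ai X Y Z) = i (T X (T Y Z))) \<and>
     (\<forall>f\<in>Ar. \<forall>g\<in>Ar. \<forall>h\<in>Ar.
         c (a (t f) (t g) (t h)) (M (M f g) h) = c (M f (M g h)) (a (s f) (s g) (s h))) \<and>
     (\<forall>X\<in>Ob. l X \<in> mhom C (T I X) X \<and> is_iso C (l X) \<and>
              r X \<in> mhom C (T X I) X \<and> is_iso C (r X)) \<and>
     (\<forall>f\<in>Ar. c (l (t f)) (M (i I) f) = c f (l (s f)) \<and>
              c (r (t f)) (M f (i I)) = c f (r (s f))) \<and>
     (\<forall>W\<in>Ob. \<forall>X\<in>Ob. \<forall>Y\<in>Ob. \<forall>Z\<in>Ob.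
         c (a W X (T Y Z)) (a (T W X) Y Z) =
         c (M (i W) (a X Y Z)) (c (a W (T X Y) Z) (M (a W X Y) (i Z)))) \<and>
     (\<forall>X\<in>Ob. \<forall>Y\<in>Ob. c (M (i X) (l Y)) (a X I Y) = M (r X) (i Y)) \<and>
     (\<forall>X\<in>Ob. \<forall>Y\<in>Ob. sg X Y \<in> mhom C (T X Y) (T Y X) \<and>
         c (sg Y X) (sg X Y) = i (T X Y)) \<and>
     (\<forall>f\<in>Ar. \<forall>g\<in>Ar. c (sg (t f) (t g)) (M f g) = c (M g f) (sg (s f) (s g))) \<and>
     (\<forall>X\<in>Ob. \<forall>Y\<in>Ob. \<forall>Z\<in>Ob.
         c (a Y Z X) (c (sg X (T Y Z)) (a X Y Z)) =
         c (M (i Y) (sg X Z)) (c (a Y X Z) (M (sg X Y) (i Z)))))"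

definition is_markov_category :: "('o, 'm) mcat \<Rightarrow> bool" where
  "is_markov_category C \<longleftrightarrow> is_symmetric_monoidal C \<and>
   (let Ob = mc_Ob C; c = mc_comp C;
        i = mc_id C; T = mc_otens C; M = mc_mtens C; I = mc_unit C;
        a = mc_alpha C; ai = mc_alpha_inv C; l = mc_lam C; r = mc_rho C; sg = mc_sigma C;
        cp = mc_copy C; d = mc_del C in
     (\<forall>X\<in>Ob. cp X \<in> mhom C X (T X X) \<and> d X \<in> mhom C X I) \<and>
     (\<forall>X\<in>Ob. c (l X) (c (M (d X) (i X)) (cp X)) = i X \<and>
              c (r X) (c (M (i X) (d X)) (cp X)) = i X) \<and>
     (\<forall>X\<in>Ob. c (a X X X) (c (M (cp X) (i X)) (cp X)) = c (M (i X) (cp X)) (cp X)) \<and>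
     (\<forall>X\<in>Ob. c (sg X X) (cp X) = cp X) \<and>
     (\<forall>X\<in>Ob. \<forall>Y\<in>Ob.
        cp (T X Y) =
          c (ai X Y (T X Y))
           (c (M (i X) (a Y X Y))
             (c (M (i X) (M (sg X Y) (i Y)))
               (c (M (i X) (ai X Y Y))
                 (c (a X X (T Y Y)) (M (cp X) (cp Y))))))) \<and>
     (\<forall>X\<in>Ob. \<forall>Y\<in>Ob. d (T X Y) = c (l I) (M (d X) (d Y))) \<and>
     c (l I) (cp I) = i I \<and> c (cp I) (l I) = i (T I I) \<and> d I = i I \<and>
     (\<forall>X\<in>Ob. \<forall>f\<in>mhom C X I. f = d X))"

definition deterministic :: "('o, 'm) mcat \<Rightarrow> 'm \<Rightarrow> bool" where
  "deterministic C f \<longleftrightarrow>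
     mc_comp C (mc_copy C (mc_tgt C f)) f =
     mc_comp C (mc_mtens C f f) (mc_copy C (mc_src C f))"

definition positive :: "('o, 'm) mcat \<Rightarrow> bool" where
  "positive C \<longleftrightarrow>
     (\<forall>f\<in>mc_Ar C. \<forall>g\<in>mc_Ar C. mc_tgt C f = mc_src C g \<longrightarrow>
        deterministic C (mc_comp C g f) \<longrightarrow>
        mc_comp C (mc_mtens C (mc_id C (mc_tgt C f)) g)
                  (mc_comp C (mc_copy C (mc_tgt C f)) f) =
        mc_comp C (mc_mtens C f (mc_comp C g f)) (mc_copy C (mc_src C f)))"

definition dilation :: "('o, 'm) mcat \<Rightarrow> 'm \<Rightarrow> 'o \<Rightarrow> 'm \<Rightarrow> bool" where
  "dilation C p E pi \<longleftrightarrow> p \<in> mc_Ar C \<and> E \<in> mc_Ob C \<and>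
     pi \<in> mhom C (mc_src C p) (mc_otens C (mc_tgt C p) E) \<and>
     mc_comp C (mc_rho C (mc_tgt C p))
       (mc_comp C (mc_mtens C (mc_id C (mc_tgt C p)) (mc_del C E)) pi) = p"

text \<open>\<open>f1, f2 : E \<rightarrow> E'\<close> are \<open>pi\<close>-dilationally equal, for \<open>pi : A \<rightarrow> X \<otimes> E\<close>;
  dilations of \<open>pi\<close> are \<open>rho : A \<rightarrow> (X \<otimes> E) \<otimes> F\<close>.\<close>
definition dil_equal :: "('o, 'm) mcat \<Rightarrow> 'o \<Rightarrow> 'o \<Rightarrow> 'm \<Rightarrow> 'm \<Rightarrow> 'm \<Rightarrow> bool" where
  "dil_equal C X E pi f1 f2 \<longleftrightarrow>
     (\<forall>F rh. dilation C pi F rh \<longrightarrow>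
        mc_comp C (mc_mtens C (mc_mtens C (mc_id C X) f1) (mc_id C F)) rh =
        mc_comp C (mc_mtens C (mc_mtens C (mc_id C X) f2) (mc_id C F)) rh)"

definition initial_dilation :: "('o, 'm) mcat \<Rightarrow> 'm \<Rightarrow> 'o \<Rightarrow> 'm \<Rightarrow> bool" where
  "initial_dilation C p E pi \<longleftrightarrow> dilation C p E pi \<and>
     (\<forall>E' pi'. dilation C p E' pi' \<longrightarrow>
        (\<exists>f \<in> mhom C E E'.
           mc_comp C (mc_mtens C (mc_id C (mc_tgt C p)) f) pi = pi') \<and>
        (\<forall>f1 \<in> mhom C E E'. \<forall>f2 \<in> mhom C E E'.
           mc_comp C (mc_mtens C (mc_id C (mc_tgt C p)) f1) pi = pi' \<and>
           mc_comp C (mc_mtens C (mc_id C (mc_tgt C p)) f2) pi = pi' \<longrightarrow>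
           dil_equal C (mc_tgt C p) E pi f1 f2))"

definition non_creative :: "('o, 'm) mcat \<Rightarrow> 'm \<Rightarrow> bool" where
  "non_creative C p \<longleftrightarrow>
     (\<forall>E pi. dilation C p E pi \<longrightarrow>
        (\<exists>io. dilation C (mc_id C (mc_src C p)) E io \<and>
              pi = mc_comp C (mc_mtens C p (mc_id C E)) io))"

end

theory Submission
  imports Defs
begin

text \<open>Write \<open>\<pi>\<^sub>X\<close> and \<open>\<pi>\<^sub>E\<close> for the marginals of \<open>\<pi> : A \<rightarrow> X \<otimes> E\<close>, i.e. its composites
  with the projections built from deletion. The key identity is that the symmetry
  \<open>X \<otimes> E \<rightarrow> E \<otimes> X\<close> is the tensor of the two projections (to \<open>E\<close> and to \<open>X\<close>) after copying
  \<open>X \<otimes> E\<close>. Feeding it into the positivity equation for \<open>f := \<pi>\<close> and \<open>g :=\<close> the projection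
  to \<open>X\<close> shows that, in a positive category, every \<open>\<pi>\<close> with deterministic marginal \<open>\<pi>\<^sub>X\<close>
  splits as \<open>(\<pi>\<^sub>X \<otimes> \<pi>\<^sub>E) \<circ> copy\<^sub>A\<close>.

  Applied to dilations of identities, this makes every dilation of \<open>id\<^sub>X\<close> factor through
  \<open>copy\<^sub>X\<close>, and every dilation of \<open>copy\<^sub>X\<close> take the form \<open>(copy\<^sub>X \<otimes> m) \<circ> copy\<^sub>X\<close>; hence maps
  that agree after \<open>copy\<^sub>X\<close> are dilationally equal, and \<open>copy\<^sub>X\<close> is initial. Applied to the
  dilations of a deterministic \<open>p\<close>, and to the dilation \<open>copy \<circ> p\<close> of a non-creative \<open>p\<close>, it
  shows that deterministic and non-creative morphisms coincide.

  Conversely, if \<open>g \<circ> f\<close> is deterministic, then non-creativity and initiality of copy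
  turn the dilation \<open>(g \<otimes> id) \<circ> copy \<circ> f\<close> of \<open>g \<circ> f\<close> into \<open>((g \<circ> f) \<otimes> h) \<circ> copy\<close>. Its
  second marginal is both \<open>f\<close> and \<open>h\<close>, and composing with the symmetry yields the
  positivity equation.\<close>

locale markov_category =
  fixes C :: "('o, 'm) mcat"
  assumes markov: "is_markov_category C"
begin

abbreviation Ob where "Ob \<equiv> mc_Ob C"
abbreviation Ar where "Ar \<equiv> mc_Ar C"
abbreviation s where "s \<equiv> mc_src C"
abbreviation t where "t \<equiv> mc_tgt C"
abbreviation cmp (infixr "\<cdot>" 55) where "g \<cdot> f \<equiv> mc_comp C g f"
abbreviation tn (infix "\<otimes>" 70) where "f \<otimes> g \<equiv> mc_mtens C f g"
abbreviation T where "T \<equiv> mc_otens C"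
abbreviation I where "I \<equiv> mc_unit C"
abbreviation i where "i \<equiv> mc_id C"
abbreviation a where "a \<equiv> mc_alpha C"
abbreviation ai where "ai \<equiv> mc_alpha_inv C"
abbreviation l where "l \<equiv> mc_lam C"
abbreviation r where "r \<equiv> mc_rho C"
abbreviation sg where "sg \<equiv> mc_sigma C"
abbreviation cp where "cp \<equiv> mc_copy C"
abbreviation d where "d \<equiv> mc_del C"

lemma symmetric_monoidal: "is_symmetric_monoidal C"
  using markov unfolding is_markov_category_def by (rule conjunct1)

lemmas category_axioms =
  symmetric_monoidal[unfolded is_symmetric_monoidal_def, THEN conjunct1, unfolded is_category_def mhom_def]
lemmas monoidal_axioms =
  symmetric_monoidal[unfolded is_symmetric_monoidal_def Let_def mhom_def, THEN conjunct2]
lemmas comonoid_axioms =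
  markov[unfolded is_markov_category_def Let_def mhom_def, THEN conjunct2]

lemma ar_ob[simp]: "f \<in> Ar \<Longrightarrow> s f \<in> Ob" "f \<in> Ar \<Longrightarrow> t f \<in> Ob"
  using category_axioms[THEN conjunct1] by auto

lemma id_ar[simp]: "X \<in> Ob \<Longrightarrow> i X \<in> Ar" "X \<in> Ob \<Longrightarrow> s (i X) = X" "X \<in> Ob \<Longrightarrow> t (i X) = X"
  using category_axioms[THEN conjunct2, THEN conjunct1] by auto

lemma comp_ar[simp]:
  "f \<in> Ar \<Longrightarrow> g \<in> Ar \<Longrightarrow> t f = s g \<Longrightarrow> g \<cdot> f \<in> Ar"
  "f \<in> Ar \<Longrightarrow> g \<in> Ar \<Longrightarrow> t f = s g \<Longrightarrow> s (g \<cdot> f) = s f"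
  "f \<in> Ar \<Longrightarrow> g \<in> Ar \<Longrightarrow> t f = s g \<Longrightarrow> t (g \<cdot> f) = t g"
  using category_axioms[THEN conjunct2, THEN conjunct2, THEN conjunct1] by auto

lemma id_left[simp]: "f \<in> Ar \<Longrightarrow> t f = X \<Longrightarrow> i X \<cdot> f = f"
  and id_right[simp]: "f \<in> Ar \<Longrightarrow> s f = X \<Longrightarrow> f \<cdot> i X = f"
  using category_axioms[THEN conjunct2, THEN conjunct2, THEN conjunct2, THEN conjunct1] by auto

lemma comp_assoc[simp]:
  "f \<in> Ar \<Longrightarrow> g \<in> Ar \<Longrightarrow> h \<in> Ar \<Longrightarrow> t f = s g \<Longrightarrow> t g = s h \<Longrightarrow> (h \<cdot> g) \<cdot> f = h \<cdot> (g \<cdot> f)"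
  using category_axioms[THEN conjunct2, THEN conjunct2, THEN conjunct2, THEN conjunct2] by simp

lemma unit_ob[simp]: "I \<in> Ob"
  using monoidal_axioms by (rule conjunct1)

lemma tensor_ob[simp]: "X \<in> Ob \<Longrightarrow> Y \<in> Ob \<Longrightarrow> T X Y \<in> Ob"
  using monoidal_axioms[THEN conjunct2, THEN conjunct1] by auto

lemma tensor_ar[simp]:
  "f \<in> Ar \<Longrightarrow> g \<in> Ar \<Longrightarrow> f \<otimes> g \<in> Ar"
  "f \<in> Ar \<Longrightarrow> g \<in> Ar \<Longrightarrow> s (f \<otimes> g) = T (s f) (s g)"
  "f \<in> Ar \<Longrightarrow> g \<in> Ar \<Longrightarrow> t (f \<otimes> g) = T (t f) (t g)"
  using monoidal_axioms[THEN conjunct2, THEN conjunct2, THEN conjunct1] by auto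

lemma tensor_id[simp]: "X \<in> Ob \<Longrightarrow> Y \<in> Ob \<Longrightarrow> i X \<otimes> i Y = i (T X Y)"
  using monoidal_axioms[THEN conjunct2, THEN conjunct2, THEN conjunct2, THEN conjunct1] by auto

lemma tensor_comp:
  "f \<in> Ar \<Longrightarrow> g \<in> Ar \<Longrightarrow> f' \<in> Ar \<Longrightarrow> g' \<in> Ar \<Longrightarrow> t f = s g \<Longrightarrow> t f' = s g' \<Longrightarrow>
   (g \<otimes> g') \<cdot> (f \<otimes> f') = (g \<cdot> f) \<otimes> (g' \<cdot> f')"
  using monoidal_axioms[THEN conjunct2, THEN conjunct2, THEN conjunct2, THEN conjunct2, THEN conjunct1]
  by simp

lemma assoc_ar[simp]:
  "X \<in> Ob \<Longrightarrow> Y \<in> Ob \<Longrightarrow> Z \<in> Ob \<Longrightarrow> a X Y Z \<in> Ar"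
  "X \<in> Ob \<Longrightarrow> Y \<in> Ob \<Longrightarrow> Z \<in> Ob \<Longrightarrow> s (a X Y Z) = T (T X Y) Z"
  "X \<in> Ob \<Longrightarrow> Y \<in> Ob \<Longrightarrow> Z \<in> Ob \<Longrightarrow> t (a X Y Z) = T X (T Y Z)"
  "X \<in> Ob \<Longrightarrow> Y \<in> Ob \<Longrightarrow> Z \<in> Ob \<Longrightarrow> ai X Y Z \<in> Ar"
  "X \<in> Ob \<Longrightarrow> Y \<in> Ob \<Longrightarrow> Z \<in> Ob \<Longrightarrow> s (ai X Y Z) = T X (T Y Z)"
  "X \<in> Ob \<Longrightarrow> Y \<in> Ob \<Longrightarrow> Z \<in> Ob \<Longrightarrow> t (ai X Y Z) = T (T X Y) Z"
  and assoc_inv[simp]: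
  "X \<in> Ob \<Longrightarrow> Y \<in> Ob \<Longrightarrow> Z \<in> Ob \<Longrightarrow> ai X Y Z \<cdot> a X Y Z = i (T (T X Y) Z)"
  "X \<in> Ob \<Longrightarrow> Y \<in> Ob \<Longrightarrow> Z \<in> Ob \<Longrightarrow> a X Y Z \<cdot> ai X Y Z = i (T X (T Y Z))"
  using monoidal_axioms[THEN conjunct2, THEN conjunct2, THEN conjunct2, THEN conjunct2, THEN conjunct2,
      THEN conjunct1]
  by auto

lemma assoc_nat: "f \<in> Ar \<Longrightarrow> g \<in> Ar \<Longrightarrow> h \<in> Ar \<Longrightarrow>
  a (t f) (t g) (t h) \<cdot> ((f \<otimes> g) \<otimes> h) = (f \<otimes> (g \<otimes> h)) \<cdot> a (s f) (s g) (s h)"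
  using monoidal_axioms[THEN conjunct2, THEN conjunct2, THEN conjunct2, THEN conjunct2, THEN conjunct2,
      THEN conjunct2, THEN conjunct1]
  by auto

lemma unitor_ar[simp]:
  "X \<in> Ob \<Longrightarrow> l X \<in> Ar" "X \<in> Ob \<Longrightarrow> s (l X) = T I X" "X \<in> Ob \<Longrightarrow> t (l X) = X"
  "X \<in> Ob \<Longrightarrow> r X \<in> Ar" "X \<in> Ob \<Longrightarrow> s (r X) = T X I" "X \<in> Ob \<Longrightarrow> t (r X) = X"
  and unitor_iso: "X \<in> Ob \<Longrightarrow> is_iso C (l X)" "X \<in> Ob \<Longrightarrow> is_iso C (r X)"
  using monoidal_axioms[THEN conjunct2, THEN conjunct2, THEN conjunct2, THEN conjunct2, THEN conjunct2,
      THEN conjunct2, THEN conjunct2, THEN conjunct1]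
  by auto

lemma lunit_nat: "f \<in> Ar \<Longrightarrow> l (t f) \<cdot> (i I \<otimes> f) = f \<cdot> l (s f)"
  and runit_nat: "f \<in> Ar \<Longrightarrow> r (t f) \<cdot> (f \<otimes> i I) = f \<cdot> r (s f)"
  using monoidal_axioms[THEN conjunct2, THEN conjunct2, THEN conjunct2, THEN conjunct2, THEN conjunct2,
      THEN conjunct2, THEN conjunct2, THEN conjunct2, THEN conjunct1]
  by auto

lemma pentagon: "W \<in> Ob \<Longrightarrow> X \<in> Ob \<Longrightarrow> Y \<in> Ob \<Longrightarrow> Z \<in> Ob \<Longrightarrow>
   a W X (T Y Z) \<cdot> a (T W X) Y Z = (i W \<otimes> a X Y Z) \<cdot> (a W (T X Y) Z \<cdot> (a W X Y \<otimes> i Z))"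
  using monoidal_axioms[THEN conjunct2, THEN conjunct2, THEN conjunct2, THEN conjunct2, THEN conjunct2,
      THEN conjunct2, THEN conjunct2, THEN conjunct2, THEN conjunct2, THEN conjunct1]
  by auto

lemma triangle: "X \<in> Ob \<Longrightarrow> Y \<in> Ob \<Longrightarrow> (i X \<otimes> l Y) \<cdot> a X I Y = r X \<otimes> i Y"
  using monoidal_axioms[THEN conjunct2, THEN conjunct2, THEN conjunct2, THEN conjunct2, THEN conjunct2,
      THEN conjunct2, THEN conjunct2, THEN conjunct2, THEN conjunct2, THEN conjunct2, THEN conjunct1]
  by auto

lemma sym_ar[simp]:
  "X \<in> Ob \<Longrightarrow> Y \<in> Ob \<Longrightarrow> sg X Y \<in> Ar"
  "X \<in> Ob \<Longrightarrow> Y \<in> Ob \<Longrightarrow> s (sg X Y) = T X Y"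
  "X \<in> Ob \<Longrightarrow> Y \<in> Ob \<Longrightarrow> t (sg X Y) = T Y X"
  and sym_inv[simp]: "X \<in> Ob \<Longrightarrow> Y \<in> Ob \<Longrightarrow> sg Y X \<cdot> sg X Y = i (T X Y)"
  using monoidal_axioms[THEN conjunct2, THEN conjunct2, THEN conjunct2, THEN conjunct2, THEN conjunct2,
      THEN conjunct2, THEN conjunct2, THEN conjunct2, THEN conjunct2, THEN conjunct2, THEN conjunct2,
      THEN conjunct1]
  by auto

lemma sym_nat: "f \<in> Ar \<Longrightarrow> g \<in> Ar \<Longrightarrow> sg (t f) (t g) \<cdot> (f \<otimes> g) = (g \<otimes> f) \<cdot> sg (s f) (s g)"
  using monoidal_axioms[THEN conjunct2, THEN conjunct2, THEN conjunct2, THEN conjunct2, THEN conjunct2,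
      THEN conjunct2, THEN conjunct2, THEN conjunct2, THEN conjunct2, THEN conjunct2, THEN conjunct2,
      THEN conjunct2, THEN conjunct1]
  by auto

lemma comonoid_ar[simp]:
  "X \<in> Ob \<Longrightarrow> cp X \<in> Ar" "X \<in> Ob \<Longrightarrow> s (cp X) = X" "X \<in> Ob \<Longrightarrow> t (cp X) = T X X"
  "X \<in> Ob \<Longrightarrow> d X \<in> Ar" "X \<in> Ob \<Longrightarrow> s (d X) = X" "X \<in> Ob \<Longrightarrow> t (d X) = I"
  using comonoid_axioms[THEN conjunct1] by auto

lemma counit:
  "X \<in> Ob \<Longrightarrow> l X \<cdot> ((d X \<otimes> i X) \<cdot> cp X) = i X"
  "X \<in> Ob \<Longrightarrow> r X \<cdot> ((i X \<otimes> d X) \<cdot> cp X) = i X"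
  using comonoid_axioms[THEN conjunct2, THEN conjunct1] by auto

lemma coassoc: "X \<in> Ob \<Longrightarrow> a X X X \<cdot> ((cp X \<otimes> i X) \<cdot> cp X) = (i X \<otimes> cp X) \<cdot> cp X"
  using comonoid_axioms[THEN conjunct2, THEN conjunct2, THEN conjunct1] by auto

lemma cocomm: "X \<in> Ob \<Longrightarrow> sg X X \<cdot> cp X = cp X"
  using comonoid_axioms[THEN conjunct2, THEN conjunct2, THEN conjunct2, THEN conjunct1] by auto

lemma copy_tensor: "X \<in> Ob \<Longrightarrow> Y \<in> Ob \<Longrightarrow> cp (T X Y) =
    ai X Y (T X Y) \<cdot> ((i X \<otimes> a Y X Y) \<cdot> ((i X \<otimes> (sg X Y \<otimes> i Y)) \<cdot>
      ((i X \<otimes> ai X Y Y) \<cdot> (a X X (T Y Y) \<cdot> (cp X \<otimes> cp Y)))))"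
  using comonoid_axioms[THEN conjunct2, THEN conjunct2, THEN conjunct2, THEN conjunct2, THEN conjunct1]
  by auto

lemma del_tensor: "X \<in> Ob \<Longrightarrow> Y \<in> Ob \<Longrightarrow> d (T X Y) = l I \<cdot> (d X \<otimes> d Y)"
  using comonoid_axioms[THEN conjunct2, THEN conjunct2, THEN conjunct2, THEN conjunct2, THEN conjunct2,
      THEN conjunct1]
  by auto

lemma del_unique: "f \<in> Ar \<Longrightarrow> t f = I \<Longrightarrow> f = d (s f)"
  using comonoid_axioms[THEN conjunct2, THEN conjunct2, THEN conjunct2, THEN conjunct2, THEN conjunct2,
      THEN conjunct2, THEN conjunct2, THEN conjunct2, THEN conjunct2]
  by auto

lemma comp_reduce:
  "g \<cdot> f = h \<Longrightarrow> f \<in> Ar \<Longrightarrow> g \<in> Ar \<Longrightarrow> k \<in> Ar \<Longrightarrow> t f = s g \<Longrightarrow> t k = s f \<Longrightarrow>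
   g \<cdot> (f \<cdot> k) = h \<cdot> k"
  by (metis comp_assoc)

lemma comp_inv_cancel:
  "g \<cdot> f = i Y \<Longrightarrow> f \<in> Ar \<Longrightarrow> g \<in> Ar \<Longrightarrow> k \<in> Ar \<Longrightarrow> t f = s g \<Longrightarrow> t k = s f \<Longrightarrow> t k = Y \<Longrightarrow>
   g \<cdot> (f \<cdot> k) = k"
  by (metis comp_assoc id_left)

lemma split_epi_cancel:
  "u \<cdot> P = v \<cdot> P \<Longrightarrow> P \<cdot> Q = i Y \<Longrightarrow> u \<in> Ar \<Longrightarrow> v \<in> Ar \<Longrightarrow> P \<in> Ar \<Longrightarrow> Q \<in> Ar \<Longrightarrow>
   t P = s u \<Longrightarrow> t P = s v \<Longrightarrow> t Q = s P \<Longrightarrow> Y = s u \<Longrightarrow> u = v"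
  by (metis comp_assoc id_right)

lemma assoc_inv_cancel[simp]:
  "X \<in> Ob \<Longrightarrow> Y \<in> Ob \<Longrightarrow> Z \<in> Ob \<Longrightarrow> k \<in> Ar \<Longrightarrow> t k = T (T X Y) Z \<Longrightarrow> ai X Y Z \<cdot> (a X Y Z \<cdot> k) = k"
  "X \<in> Ob \<Longrightarrow> Y \<in> Ob \<Longrightarrow> Z \<in> Ob \<Longrightarrow> k \<in> Ar \<Longrightarrow> t k = T X (T Y Z) \<Longrightarrow> a X Y Z \<cdot> (ai X Y Z \<cdot> k) = k"
  by (rule comp_inv_cancel; simp)+

lemma sym_inv_cancel[simp]:
  "X \<in> Ob \<Longrightarrow> Y \<in> Ob \<Longrightarrow> k \<in> Ar \<Longrightarrow> t k = T X Y \<Longrightarrow> sg Y X \<cdot> (sg X Y \<cdot> k) = k"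
  by (rule comp_inv_cancel; simp)

lemma tensor_comp_reduce:
  "f \<in> Ar \<Longrightarrow> g \<in> Ar \<Longrightarrow> f' \<in> Ar \<Longrightarrow> g' \<in> Ar \<Longrightarrow> t f = s g \<Longrightarrow> t f' = s g' \<Longrightarrow>
   k \<in> Ar \<Longrightarrow> t k = T (s f) (s f') \<Longrightarrow> (g \<otimes> g') \<cdot> ((f \<otimes> f') \<cdot> k) = ((g \<cdot> f) \<otimes> (g' \<cdot> f')) \<cdot> k"
  by (simp add: comp_reduce tensor_comp)

lemma id_tensor_comp:
  "f \<in> Ar \<Longrightarrow> g \<in> Ar \<Longrightarrow> t g = s f \<Longrightarrow> X \<in> Ob \<Longrightarrow> i X \<otimes> (f \<cdot> g) = (i X \<otimes> f) \<cdot> (i X \<otimes> g)"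
  using tensor_comp[of "i X" "i X" g f] by simp

lemma comp_tensor_id:
  "f \<in> Ar \<Longrightarrow> g \<in> Ar \<Longrightarrow> t g = s f \<Longrightarrow> X \<in> Ob \<Longrightarrow> (f \<cdot> g) \<otimes> i X = (f \<otimes> i X) \<cdot> (g \<otimes> i X)"
  using tensor_comp[of g f "i X" "i X"] by simp

lemma assoc_inv_nat:
  assumes "f \<in> Ar" "g \<in> Ar" "h \<in> Ar"
  shows "ai (t f) (t g) (t h) \<cdot> (f \<otimes> (g \<otimes> h)) = ((f \<otimes> g) \<otimes> h) \<cdot> ai (s f) (s g) (s h)"
proof -
  have nat: "a (t f) (t g) (t h) \<cdot> ((f \<otimes> g) \<otimes> h) = (f \<otimes> (g \<otimes> h)) \<cdot> a (s f) (s g) (s h)"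
    using assoc_nat assms by blast
  have "ai (t f) (t g) (t h) \<cdot> (f \<otimes> (g \<otimes> h))
      = ai (t f) (t g) (t h) \<cdot> ((f \<otimes> (g \<otimes> h)) \<cdot> (a (s f) (s g) (s h) \<cdot> ai (s f) (s g) (s h)))"
    using assms by simp
  also have "\<dots> = ai (t f) (t g) (t h) \<cdot> (a (t f) (t g) (t h) \<cdot> (((f \<otimes> g) \<otimes> h) \<cdot> ai (s f) (s g) (s h)))"
    using assms by (simp add: nat comp_reduce[OF nat])
  also have "\<dots> = ((f \<otimes> g) \<otimes> h) \<cdot> ai (s f) (s g) (s h)"
    using assms by simp
  finally show ?thesis .
qed

lemma tensor_unit_left_cancel:
  assumes "f \<in> Ar" "g \<in> Ar" "s f = s g" "t f = t g" and eq: "i I \<otimes> f = i I \<otimes> g"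
  shows "f = g"
proof -
  obtain h where h: "h \<in> Ar" "s h = s f" "t h = T I (s f)" "l (s f) \<cdot> h = i (s f)"
    using unitor_iso(1)[of "s f"] assms unfolding is_iso_def mhom_def by auto
  have "f = f \<cdot> (l (s f) \<cdot> h)" using assms(1) h by simp
  also have "\<dots> = l (t f) \<cdot> ((i I \<otimes> f) \<cdot> h)" using assms(1) h by (simp add: comp_reduce[OF lunit_nat[of f]])
  also have "\<dots> = l (t g) \<cdot> ((i I \<otimes> g) \<cdot> h)" using assms eq by simp
  also have "\<dots> = g \<cdot> (l (s g) \<cdot> h)" using assms h by (simp add: comp_reduce[OF lunit_nat[of g]])
  also have "\<dots> = g" using assms h by simp
  finally show ?thesis .
qed

lemma tensor_unit_right_cancel:
  assumes "f \<in> Ar" "g \<in> Ar" "s f = s g" "t f = t g" and eq: "f \<otimes> i I = g \<otimes> i I"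
  shows "f = g"
proof -
  obtain h where h: "h \<in> Ar" "s h = s f" "t h = T (s f) I" "r (s f) \<cdot> h = i (s f)"
    using unitor_iso(2)[of "s f"] assms unfolding is_iso_def mhom_def by auto
  have "f = f \<cdot> (r (s f) \<cdot> h)" using assms(1) h by simp
  also have "\<dots> = r (t f) \<cdot> ((f \<otimes> i I) \<cdot> h)" using assms(1) h by (simp add: comp_reduce[OF runit_nat[of f]])
  also have "\<dots> = r (t g) \<cdot> ((g \<otimes> i I) \<cdot> h)" using assms eq by simp
  also have "\<dots> = g \<cdot> (r (s g) \<cdot> h)" using assms h by (simp add: comp_reduce[OF runit_nat[of g]])
  also have "\<dots> = g" using assms h by simp
  finally show ?thesis .
qed

text \<open>Kelly's lemma; it follows from the pentagon and triangle axioms.\<close>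
lemma lunit_tensor:
  assumes A: "X \<in> Ob" "Y \<in> Ob"
  shows "l (T X Y) \<cdot> a I X Y = l X \<otimes> i Y"
proof -
  define P where "P = a I (T I X) Y \<cdot> (a I I X \<otimes> i Y)"
  define Q where "Q = (ai I I X \<otimes> i Y) \<cdot> ai I (T I X) Y"
  have PQ: "P \<cdot> Q = i (T I (T (T I X) Y))"
    using A unfolding P_def Q_def by (simp add: tensor_comp tensor_comp_reduce)
  have P: "P \<in> Ar" "s P = T (T (T I I) X) Y" "t P = T I (T (T I X) Y)" "Q \<in> Ar" "t Q = s P"
    using A unfolding P_def Q_def by simp_all
  have pent: "a I I (T X Y) \<cdot> a (T I I) X Y = (i I \<otimes> a I X Y) \<cdot> (a I (T I X) Y \<cdot> (a I I X \<otimes> i Y))"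
    using pentagon A by simp
  have tri1: "(i I \<otimes> l (T X Y)) \<cdot> a I I (T X Y) = r I \<otimes> i (T X Y)"
    using triangle A by simp
  have tri2: "(i I \<otimes> l X) \<cdot> a I I X = r I \<otimes> i X"
    using triangle A by simp
  have nat1: "a I X Y \<cdot> ((r I \<otimes> i X) \<otimes> i Y) = (r I \<otimes> i (T X Y)) \<cdot> a (T I I) X Y"
    using assoc_nat[of "r I" "i X" "i Y"] A by simp
  have nat2: "a I X Y \<cdot> ((i I \<otimes> l X) \<otimes> i Y) = (i I \<otimes> (l X \<otimes> i Y)) \<cdot> a I (T I X) Y"
    using assoc_nat[of "i I" "l X" "i Y"] A by simp
  have "(i I \<otimes> (l (T X Y) \<cdot> a I X Y)) \<cdot> P
      = (i I \<otimes> l (T X Y)) \<cdot> ((i I \<otimes> a I X Y) \<cdot> (a I (T I X) Y \<cdot> (a I I X \<otimes> i Y)))"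
    using A unfolding P_def by (simp add: id_tensor_comp)
  also have "\<dots> = (i I \<otimes> l (T X Y)) \<cdot> (a I I (T X Y) \<cdot> a (T I I) X Y)"
    using A by (simp add: pent)
  also have "\<dots> = (r I \<otimes> i (T X Y)) \<cdot> a (T I I) X Y"
    using A by (simp add: comp_reduce[OF tri1])
  also have "\<dots> = a I X Y \<cdot> ((r I \<otimes> i X) \<otimes> i Y)"
    using A by (simp add: nat1)
  also have "\<dots> = a I X Y \<cdot> (((i I \<otimes> l X) \<cdot> a I I X) \<otimes> i Y)"
    using A by (simp add: tri2)
  also have "\<dots> = a I X Y \<cdot> (((i I \<otimes> l X) \<otimes> i Y) \<cdot> (a I I X \<otimes> i Y))"
    using A by (simp add: tensor_comp)
  also have "\<dots> = (i I \<otimes> (l X \<otimes> i Y)) \<cdot> P"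
    using A unfolding P_def by (simp add: comp_reduce[OF nat2])
  finally have "i I \<otimes> (l (T X Y) \<cdot> a I X Y) = i I \<otimes> (l X \<otimes> i Y)"
    by (rule split_epi_cancel[OF _ PQ]) (use A P in simp_all)
  then show ?thesis
    by (rule tensor_unit_left_cancel[rotated 4]) (use A in simp_all)
qed

lemma lunit_tensor_inv: "X \<in> Ob \<Longrightarrow> Y \<in> Ob \<Longrightarrow> (l X \<otimes> i Y) \<cdot> ai I X Y = l (T X Y)"
  using comp_reduce[OF lunit_tensor, of X Y "ai I X Y"] by simp

lemma runit_tensor:
  assumes A: "X \<in> Ob" "Y \<in> Ob"
  shows "(i X \<otimes> r Y) \<cdot> a X Y I = r (T X Y)"
proof -
  have pent: "a X Y (T I I) \<cdot> a (T X Y) I I = (i X \<otimes> a Y I I) \<cdot> (a X (T Y I) I \<cdot> (a X Y I \<otimes> i I))"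
    using pentagon A by simp
  have tri1: "(i Y \<otimes> l I) \<cdot> a Y I I = r Y \<otimes> i I"
    using triangle A by simp
  have tri2: "(i (T X Y) \<otimes> l I) \<cdot> a (T X Y) I I = r (T X Y) \<otimes> i I"
    using triangle A by simp
  have nat1: "a X Y I \<cdot> ((i X \<otimes> r Y) \<otimes> i I) = (i X \<otimes> (r Y \<otimes> i I)) \<cdot> a X (T Y I) I"
    using assoc_nat[of "i X" "r Y" "i I"] A by simp
  have nat2: "a X Y I \<cdot> (i (T X Y) \<otimes> l I) = (i X \<otimes> (i Y \<otimes> l I)) \<cdot> a X Y (T I I)"
    using assoc_nat[of "i X" "i Y" "l I"] A by simp
  have "a X Y I \<cdot> (((i X \<otimes> r Y) \<cdot> a X Y I) \<otimes> i I)
      = a X Y I \<cdot> (((i X \<otimes> r Y) \<otimes> i I) \<cdot> (a X Y I \<otimes> i I))"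
    using A by (simp add: comp_tensor_id)
  also have "\<dots> = (i X \<otimes> (r Y \<otimes> i I)) \<cdot> (a X (T Y I) I \<cdot> (a X Y I \<otimes> i I))"
    using A by (simp add: comp_reduce[OF nat1])
  also have "\<dots> = (i X \<otimes> ((i Y \<otimes> l I) \<cdot> a Y I I)) \<cdot> (a X (T Y I) I \<cdot> (a X Y I \<otimes> i I))"
    using A by (simp add: tri1)
  also have "\<dots> = (i X \<otimes> (i Y \<otimes> l I)) \<cdot> (a X Y (T I I) \<cdot> a (T X Y) I I)"
    using A by (simp add: id_tensor_comp pent)
  also have "\<dots> = a X Y I \<cdot> (((i X \<otimes> i Y) \<otimes> l I) \<cdot> a (T X Y) I I)"
    using A by (simp add: comp_reduce[OF nat2])
  also have "\<dots> = a X Y I \<cdot> (r (T X Y) \<otimes> i I)"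
    using A by (simp add: tri2)
  finally have "ai X Y I \<cdot> (a X Y I \<cdot> (((i X \<otimes> r Y) \<cdot> a X Y I) \<otimes> i I))
      = ai X Y I \<cdot> (a X Y I \<cdot> (r (T X Y) \<otimes> i I))"
    by simp
  then have "((i X \<otimes> r Y) \<cdot> a X Y I) \<otimes> i I = r (T X Y) \<otimes> i I"
    using A by simp
  then show ?thesis
    by (rule tensor_unit_right_cancel[rotated 4]) (use A in simp_all)
qed

lemma del_nat: "f \<in> Ar \<Longrightarrow> d (t f) \<cdot> f = d (s f)"
  using del_unique[of "d (t f) \<cdot> f"] by simp

lemma coassoc_inv: "X \<in> Ob \<Longrightarrow> ai X X X \<cdot> ((i X \<otimes> cp X) \<cdot> cp X) = (cp X \<otimes> i X) \<cdot> cp X"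
  using coassoc[of X] assoc_inv_cancel(1)[of X X X "(cp X \<otimes> i X) \<cdot> cp X"] by simp

lemma deterministic_id: "X \<in> Ob \<Longrightarrow> deterministic C (i X)"
  unfolding deterministic_def by simp

definition proj1 :: "'o \<Rightarrow> 'o \<Rightarrow> 'm" where
  "proj1 X E = r X \<cdot> (i X \<otimes> d E)"

definition proj2 :: "'o \<Rightarrow> 'o \<Rightarrow> 'm" where
  "proj2 X E = l E \<cdot> (d X \<otimes> i E)"

lemma proj_ar[simp]:
  "X \<in> Ob \<Longrightarrow> E \<in> Ob \<Longrightarrow> proj1 X E \<in> Ar"
  "X \<in> Ob \<Longrightarrow> E \<in> Ob \<Longrightarrow> s (proj1 X E) = T X E"
  "X \<in> Ob \<Longrightarrow> E \<in> Ob \<Longrightarrow> t (proj1 X E) = X"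
  "X \<in> Ob \<Longrightarrow> E \<in> Ob \<Longrightarrow> proj2 X E \<in> Ar"
  "X \<in> Ob \<Longrightarrow> E \<in> Ob \<Longrightarrow> s (proj2 X E) = T X E"
  "X \<in> Ob \<Longrightarrow> E \<in> Ob \<Longrightarrow> t (proj2 X E) = E"
  unfolding proj1_def proj2_def by simp_all

lemma dilation_iff:
  "dilation C p E pi \<longleftrightarrow> p \<in> Ar \<and> E \<in> Ob \<and> pi \<in> Ar \<and> s pi = s p \<and> t pi = T (t p) E \<and>
     proj1 (t p) E \<cdot> pi = p"
  unfolding dilation_def mhom_def proj1_def by auto

lemma proj1_copy_pair:
  assumes "f \<in> Ar" "g \<in> Ar" "s f = A" "s g = A"
  shows "proj1 (t f) (t g) \<cdot> ((f \<otimes> g) \<cdot> cp A) = f"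
proof -
  have A: "A \<in> Ob" using assms by auto
  have del_pair: "(i (t f) \<otimes> d (t g)) \<cdot> (f \<otimes> g) = (f \<otimes> i I) \<cdot> (i A \<otimes> d A)"
    using assms A by (simp add: tensor_comp del_nat)
  have runit_f: "r (t f) \<cdot> (f \<otimes> i I) = f \<cdot> r A"
    using runit_nat[of f] assms by simp
  have "proj1 (t f) (t g) \<cdot> ((f \<otimes> g) \<cdot> cp A) = r (t f) \<cdot> ((f \<otimes> i I) \<cdot> ((i A \<otimes> d A) \<cdot> cp A))"
    unfolding proj1_def using assms A by (simp add: comp_reduce[OF del_pair])
  also have "\<dots> = f \<cdot> (r A \<cdot> ((i A \<otimes> d A) \<cdot> cp A))"
    using assms A by (simp add: comp_reduce[OF runit_f])
  also have "\<dots> = f"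
    using assms A by (simp add: counit)
  finally show ?thesis .
qed

lemma proj2_copy_pair:
  assumes "f \<in> Ar" "g \<in> Ar" "s f = A" "s g = A"
  shows "proj2 (t f) (t g) \<cdot> ((f \<otimes> g) \<cdot> cp A) = g"
proof -
  have A: "A \<in> Ob" using assms by auto
  have del_pair: "(d (t f) \<otimes> i (t g)) \<cdot> (f \<otimes> g) = (i I \<otimes> g) \<cdot> (d A \<otimes> i A)"
    using assms A by (simp add: tensor_comp del_nat)
  have lunit_g: "l (t g) \<cdot> (i I \<otimes> g) = g \<cdot> l A"
    using lunit_nat[of g] assms by simp
  have "proj2 (t f) (t g) \<cdot> ((f \<otimes> g) \<cdot> cp A) = l (t g) \<cdot> ((i I \<otimes> g) \<cdot> ((d A \<otimes> i A) \<cdot> cp A))"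
    unfolding proj2_def using assms A by (simp add: comp_reduce[OF del_pair])
  also have "\<dots> = g \<cdot> (l A \<cdot> ((d A \<otimes> i A) \<cdot> cp A))"
    using assms A by (simp add: comp_reduce[OF lunit_g])
  also have "\<dots> = g"
    using assms A by (simp add: counit)
  finally show ?thesis .
qed

lemma proj_copy[simp]: "X \<in> Ob \<Longrightarrow> proj1 X X \<cdot> cp X = i X" "X \<in> Ob \<Longrightarrow> proj2 X X \<cdot> cp X = i X"
  using proj1_copy_pair[of "i X" "i X" X] proj2_copy_pair[of "i X" "i X" X] by simp_all

lemma sym_copy_pair:
  assumes "f \<in> Ar" "g \<in> Ar" "s f = A" "s g = A"
  shows "sg (t f) (t g) \<cdot> ((f \<otimes> g) \<cdot> cp A) = (g \<otimes> f) \<cdot> cp A"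
proof -
  have "A \<in> Ob" using assms by auto
  then show ?thesis
    using assms comp_reduce[OF sym_nat[of f g], of "cp A"] by (simp add: cocomm)
qed

lemma tensor_proj1_shuffle:
  assumes A: "X \<in> Ob" "E \<in> Ob"
  shows "(i E \<otimes> proj1 X E) \<cdot> (a E X E \<cdot> ((sg X E \<otimes> i E) \<cdot> ai X E E)) = sg X E \<cdot> (i X \<otimes> proj1 E E)"
proof -
  have nat1: "(i E \<otimes> (i X \<otimes> d E)) \<cdot> a E X E = a E X I \<cdot> (i (T E X) \<otimes> d E)"
    using assoc_nat[of "i E" "i X" "d E"] A by simp
  have runit_EX: "(i E \<otimes> r X) \<cdot> a E X I = r (T E X)" using runit_tensor A by simp
  have interchange: "(i (T E X) \<otimes> d E) \<cdot> (sg X E \<otimes> i E) = (sg X E \<otimes> i I) \<cdot> (i (T X E) \<otimes> d E)"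
    using A by (simp add: tensor_comp)
  have sym_runit: "r (T E X) \<cdot> (sg X E \<otimes> i I) = sg X E \<cdot> r (T X E)" using runit_nat[of "sg X E"] A by simp
  have runit_XE: "r (T X E) = (i X \<otimes> r E) \<cdot> a X E I" using runit_tensor[symmetric] A by simp
  have nat2: "a X E I \<cdot> (i (T X E) \<otimes> d E) = (i X \<otimes> (i E \<otimes> d E)) \<cdot> a X E E"
    using assoc_nat[of "i X" "i E" "d E"] A by simp
  have "(i E \<otimes> (r X \<cdot> (i X \<otimes> d E))) \<cdot> (a E X E \<cdot> ((sg X E \<otimes> i E) \<cdot> ai X E E))
     = (i E \<otimes> r X) \<cdot> ((i E \<otimes> (i X \<otimes> d E)) \<cdot> (a E X E \<cdot> ((sg X E \<otimes> i E) \<cdot> ai X E E)))"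
    using A by (simp add: id_tensor_comp)
  also have "\<dots> = (i E \<otimes> r X) \<cdot> (a E X I \<cdot> ((i (T E X) \<otimes> d E) \<cdot> ((sg X E \<otimes> i E) \<cdot> ai X E E)))"
    using A by (simp add: comp_reduce[OF nat1])
  also have "\<dots> = r (T E X) \<cdot> ((i (T E X) \<otimes> d E) \<cdot> ((sg X E \<otimes> i E) \<cdot> ai X E E))"
    using A by (simp add: comp_reduce[OF runit_EX])
  also have "\<dots> = r (T E X) \<cdot> ((sg X E \<otimes> i I) \<cdot> ((i (T X E) \<otimes> d E) \<cdot> ai X E E))"
    using A by (simp add: comp_reduce[OF interchange])
  also have "\<dots> = sg X E \<cdot> (r (T X E) \<cdot> ((i (T X E) \<otimes> d E) \<cdot> ai X E E))"
    using A by (simp add: comp_reduce[OF sym_runit])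
  also have "\<dots> = sg X E \<cdot> ((i X \<otimes> r E) \<cdot> (a X E I \<cdot> ((i (T X E) \<otimes> d E) \<cdot> ai X E E)))"
    using A by (simp add: runit_XE)
  also have "\<dots> = sg X E \<cdot> ((i X \<otimes> r E) \<cdot> ((i X \<otimes> (i E \<otimes> d E)) \<cdot> (a X E E \<cdot> ai X E E)))"
    using A by (simp add: comp_reduce[OF nat2])
  also have "\<dots> = sg X E \<cdot> (i X \<otimes> (r E \<cdot> (i E \<otimes> d E)))"
    using A by (simp add: tensor_comp)
  finally show ?thesis unfolding proj1_def .
qed

lemma copy_tensor_proj1:
  assumes A: "X \<in> Ob" "E \<in> Ob"
  shows "(i (T X E) \<otimes> proj1 X E) \<cdot> cp (T X E) = ai X E X \<cdot> ((i X \<otimes> sg X E) \<cdot> (a X X E \<cdot> (cp X \<otimes> i E)))"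
proof -
  have inv_nat1: "(i (T X E) \<otimes> (r X \<cdot> (i X \<otimes> d E))) \<cdot> ai X E (T X E) = ai X E X \<cdot> (i X \<otimes> (i E \<otimes> (r X \<cdot> (i X \<otimes> d E))))"
    using assoc_inv_nat[of "i X" "i E" "r X \<cdot> (i X \<otimes> d E)"] A by simp
  have shuffle: "(i E \<otimes> (r X \<cdot> (i X \<otimes> d E))) \<cdot> (a E X E \<cdot> ((sg X E \<otimes> i E) \<cdot> ai X E E)) =
    sg X E \<cdot> (i X \<otimes> (r E \<cdot> (i E \<otimes> d E)))" using tensor_proj1_shuffle[unfolded proj1_def] A by simp
  have nat2: "(i X \<otimes> (i X \<otimes> (r E \<cdot> (i E \<otimes> d E)))) \<cdot> a X X (T E E) = a X X E \<cdot> (i (T X X) \<otimes> (r E \<cdot> (i E \<otimes> d E)))"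
    using assoc_nat[of "i X" "i X" "r E \<cdot> (i E \<otimes> d E)"] A by simp
  have "(i (T X E) \<otimes> (r X \<cdot> (i X \<otimes> d E))) \<cdot> cp (T X E) =
     ai X E X \<cdot> ((i X \<otimes> (i E \<otimes> (r X \<cdot> (i X \<otimes> d E)))) \<cdot> ((i X \<otimes> a E X E) \<cdot> ((i X \<otimes> (sg X E \<otimes> i E)) \<cdot>
             ((i X \<otimes> ai X E E) \<cdot> (a X X (T E E) \<cdot> (cp X \<otimes> cp E))))))"
    using A by (simp add: copy_tensor comp_reduce[OF inv_nat1])
  also have "\<dots> = ai X E X \<cdot> ((i X \<otimes> ((i E \<otimes> (r X \<cdot> (i X \<otimes> d E))) \<cdot> (a E X E \<cdot> ((sg X E \<otimes> i E) \<cdot> ai X E E))))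
      \<cdot> (a X X (T E E) \<cdot> (cp X \<otimes> cp E)))"
    using A by (simp add: tensor_comp_reduce)
  also have "\<dots> = ai X E X \<cdot> ((i X \<otimes> (sg X E \<cdot> (i X \<otimes> (r E \<cdot> (i E \<otimes> d E))))) \<cdot> (a X X (T E E) \<cdot> (cp X \<otimes> cp E)))"
    using A by (simp only: shuffle)
  also have "\<dots> = ai X E X \<cdot> ((i X \<otimes> sg X E) \<cdot> ((i X \<otimes> (i X \<otimes> (r E \<cdot> (i E \<otimes> d E)))) \<cdot> (a X X (T E E) \<cdot> (cp X \<otimes> cp E))))"
    using A by (simp add: id_tensor_comp)
  also have "\<dots> = ai X E X \<cdot> ((i X \<otimes> sg X E) \<cdot> (a X X E \<cdot> ((i (T X X) \<otimes> (r E \<cdot> (i E \<otimes> d E))) \<cdot> (cp X \<otimes> cp E))))"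
    using A by (simp add: comp_reduce[OF nat2])
  also have "\<dots> = ai X E X \<cdot> ((i X \<otimes> sg X E) \<cdot> (a X X E \<cdot> (cp X \<otimes> i E)))"
    using A by (simp add: tensor_comp counit)
  finally show ?thesis unfolding proj1_def .
qed

lemma proj2_shuffle_copy:
  assumes A: "X \<in> Ob" "E \<in> Ob"
  shows "(proj2 X E \<otimes> i X) \<cdot> (ai X E X \<cdot> ((i X \<otimes> sg X E) \<cdot> (a X X E \<cdot> (cp X \<otimes> i E)))) = sg X E"
proof -
  have inv_nat1: "((d X \<otimes> i E) \<otimes> i X) \<cdot> ai X E X = ai I E X \<cdot> (d X \<otimes> i (T E X))"
    using assoc_inv_nat[of "d X" "i E" "i X"] A by simp
  have lunit_EX: "(l E \<otimes> i X) \<cdot> ai I E X = l (T E X)" using lunit_tensor_inv A by simp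
  have interchange: "(d X \<otimes> i (T E X)) \<cdot> (i X \<otimes> sg X E) = (i I \<otimes> sg X E) \<cdot> (d X \<otimes> i (T X E))"
    using A by (simp add: tensor_comp)
  have sym_lunit: "l (T E X) \<cdot> (i I \<otimes> sg X E) = sg X E \<cdot> l (T X E)" using lunit_nat[of "sg X E"] A by simp
  have lunit_XE: "l (T X E) = (l X \<otimes> i E) \<cdot> ai I X E" using lunit_tensor_inv A by simp
  have inv_nat2: "ai I X E \<cdot> (d X \<otimes> i (T X E)) = ((d X \<otimes> i X) \<otimes> i E) \<cdot> ai X X E"
    using assoc_inv_nat[of "d X" "i X" "i E"] A by simp
  have "((l E \<cdot> (d X \<otimes> i E)) \<otimes> i X) \<cdot> (ai X E X \<cdot> ((i X \<otimes> sg X E) \<cdot> (a X X E \<cdot> (cp X \<otimes> i E))))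
     = (l E \<otimes> i X) \<cdot> (((d X \<otimes> i E) \<otimes> i X) \<cdot> (ai X E X \<cdot> ((i X \<otimes> sg X E) \<cdot> (a X X E \<cdot> (cp X \<otimes> i E)))))"
    using A by (simp add: comp_tensor_id)
  also have "\<dots> = (l E \<otimes> i X) \<cdot> (ai I E X \<cdot> ((d X \<otimes> i (T E X)) \<cdot> ((i X \<otimes> sg X E) \<cdot> (a X X E \<cdot> (cp X \<otimes> i E)))))"
    using A by (simp add: comp_reduce[OF inv_nat1])
  also have "\<dots> = l (T E X) \<cdot> ((d X \<otimes> i (T E X)) \<cdot> ((i X \<otimes> sg X E) \<cdot> (a X X E \<cdot> (cp X \<otimes> i E))))"
    using A by (simp add: comp_reduce[OF lunit_EX])
  also have "\<dots> = l (T E X) \<cdot> ((i I \<otimes> sg X E) \<cdot> ((d X \<otimes> i (T X E)) \<cdot> (a X X E \<cdot> (cp X \<otimes> i E))))"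
    using A by (simp add: comp_reduce[OF interchange])
  also have "\<dots> = sg X E \<cdot> (l (T X E) \<cdot> ((d X \<otimes> i (T X E)) \<cdot> (a X X E \<cdot> (cp X \<otimes> i E))))"
    using A by (simp add: comp_reduce[OF sym_lunit])
  also have "\<dots> = sg X E \<cdot> ((l X \<otimes> i E) \<cdot> (ai I X E \<cdot> ((d X \<otimes> i (T X E)) \<cdot> (a X X E \<cdot> (cp X \<otimes> i E)))))"
    using A by (simp add: lunit_XE)
  also have "\<dots> = sg X E \<cdot> ((l X \<otimes> i E) \<cdot> (((d X \<otimes> i X) \<otimes> i E) \<cdot> (ai X X E \<cdot> (a X X E \<cdot> (cp X \<otimes> i E)))))"
    using A by (simp add: comp_reduce[OF inv_nat2])
  also have "\<dots> = sg X E"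
    using A by (simp add: tensor_comp counit)
  finally show ?thesis unfolding proj2_def .
qed

lemma proj_pair_copy_tensor:
  assumes "X \<in> Ob" "E \<in> Ob"
  shows "(proj2 X E \<otimes> proj1 X E) \<cdot> cp (T X E) = sg X E"
proof -
  have "(proj2 X E \<otimes> proj1 X E) \<cdot> cp (T X E)
      = (proj2 X E \<otimes> i X) \<cdot> ((i (T X E) \<otimes> proj1 X E) \<cdot> cp (T X E))"
    using assms by (simp add: tensor_comp_reduce)
  also have "\<dots> = sg X E"
    using assms by (simp only: copy_tensor_proj1 proj2_shuffle_copy)
  finally show ?thesis .
qed

lemma positive_split:
  assumes pos: "positive C" and A: "X \<in> Ob" "E \<in> Ob" "pi \<in> Ar" "t pi = T X E"
    and det: "deterministic C (proj1 X E \<cdot> pi)"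
  shows "pi = ((proj1 X E \<cdot> pi) \<otimes> (proj2 X E \<cdot> pi)) \<cdot> cp (s pi)"
proof -
  let ?p = "proj1 X E \<cdot> pi" and ?h = "proj2 X E \<cdot> pi"
  have pos_pi: "(i (T X E) \<otimes> proj1 X E) \<cdot> (cp (T X E) \<cdot> pi) = (pi \<otimes> ?p) \<cdot> cp (s pi)"
    using pos[unfolded positive_def, rule_format, of pi "proj1 X E"] A det by simp
  have "sg X E \<cdot> pi = ((proj2 X E \<otimes> proj1 X E) \<cdot> cp (T X E)) \<cdot> pi"
    using A by (simp add: proj_pair_copy_tensor)
  also have "\<dots> = (proj2 X E \<otimes> i X) \<cdot> ((i (T X E) \<otimes> proj1 X E) \<cdot> (cp (T X E) \<cdot> pi))"
    using A by (simp add: tensor_comp_reduce)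
  also have "\<dots> = (proj2 X E \<otimes> i X) \<cdot> ((pi \<otimes> ?p) \<cdot> cp (s pi))"
    by (simp only: pos_pi)
  also have "\<dots> = (?h \<otimes> ?p) \<cdot> cp (s pi)"
    using A by (simp add: tensor_comp_reduce)
  finally have "sg E X \<cdot> (sg X E \<cdot> pi) = sg E X \<cdot> ((?h \<otimes> ?p) \<cdot> cp (s pi))"
    by simp
  then show ?thesis
    using A sym_copy_pair[of ?h ?p "s pi"] by simp
qed

lemma positive_id_dilation_split:
  assumes "positive C" "X \<in> Ob" "E \<in> Ob" "pi \<in> Ar" "s pi = X" "t pi = T X E" "proj1 X E \<cdot> pi = i X"
  shows "pi = (i X \<otimes> (proj2 X E \<cdot> pi)) \<cdot> cp X"
  using positive_split[OF assms(1-4,6)] assms(2,5,7) deterministic_id by simp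

lemma proj1_assoc:
  assumes "X \<in> Ob" "Y \<in> Ob" "Z \<in> Ob"
  shows "proj1 X (T Y Z) \<cdot> a X Y Z = proj1 X Y \<cdot> proj1 (T X Y) Z"
proof -
  have nat: "(i X \<otimes> (d Y \<otimes> d Z)) \<cdot> a X Y Z = a X I I \<cdot> ((i X \<otimes> d Y) \<otimes> d Z)"
    using assoc_nat[of "i X" "d Y" "d Z"] assms by simp
  have tri: "(i X \<otimes> l I) \<cdot> a X I I = r X \<otimes> i I"
    using triangle assms by simp
  have runit1: "r X \<cdot> (r X \<otimes> i I) = r X \<cdot> r (T X I)"
    using runit_nat[of "r X"] assms by simp
  have runit2: "r (T X I) \<cdot> ((i X \<otimes> d Y) \<otimes> i I) = (i X \<otimes> d Y) \<cdot> r (T X Y)"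
    using runit_nat[of "i X \<otimes> d Y"] assms by simp
  have del: "(i X \<otimes> d Y) \<otimes> d Z = ((i X \<otimes> d Y) \<otimes> i I) \<cdot> (i (T X Y) \<otimes> d Z)"
    using assms by (simp add: tensor_comp)
  have "r X \<cdot> ((i X \<otimes> d (T Y Z)) \<cdot> a X Y Z) = r X \<cdot> ((i X \<otimes> l I) \<cdot> ((i X \<otimes> (d Y \<otimes> d Z)) \<cdot> a X Y Z))"
    using assms by (simp add: del_tensor id_tensor_comp)
  also have "\<dots> = r X \<cdot> ((i X \<otimes> l I) \<cdot> (a X I I \<cdot> ((i X \<otimes> d Y) \<otimes> d Z)))"
    by (simp only: nat)
  also have "\<dots> = r X \<cdot> (r (T X I) \<cdot> ((i X \<otimes> d Y) \<otimes> d Z))"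
    using assms by (simp add: comp_reduce[OF tri] comp_reduce[OF runit1])
  also have "\<dots> = r X \<cdot> ((i X \<otimes> d Y) \<cdot> (r (T X Y) \<cdot> (i (T X Y) \<otimes> d Z)))"
    using assms by (simp add: del comp_reduce[OF runit2])
  finally show ?thesis
    unfolding proj1_def using assms by simp
qed

lemma proj1_proj2_assoc:
  assumes "X \<in> Ob" "Y \<in> Ob" "Z \<in> Ob"
  shows "proj1 Y Z \<cdot> (proj2 X (T Y Z) \<cdot> a X Y Z) = proj2 X Y \<cdot> proj1 (T X Y) Z"
proof -
  have lunit: "(i Y \<otimes> d Z) \<cdot> l (T Y Z) = l (T Y I) \<cdot> (i I \<otimes> (i Y \<otimes> d Z))"
    using lunit_nat[of "i Y \<otimes> d Z"] assms by simp
  have del1: "(i I \<otimes> (i Y \<otimes> d Z)) \<cdot> (d X \<otimes> i (T Y Z)) = d X \<otimes> (i Y \<otimes> d Z)"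
    using assms by (simp add: tensor_comp)
  have nat: "(d X \<otimes> (i Y \<otimes> d Z)) \<cdot> a X Y Z = a I Y I \<cdot> ((d X \<otimes> i Y) \<otimes> d Z)"
    using assoc_nat[of "d X" "i Y" "d Z"] assms by simp
  have lunit_runit: "r Y \<cdot> (l Y \<otimes> i I) = l Y \<cdot> r (T I Y)"
    using runit_nat[of "l Y"] assms by simp
  have runit: "r (T I Y) \<cdot> ((d X \<otimes> i Y) \<otimes> i I) = (d X \<otimes> i Y) \<cdot> r (T X Y)"
    using runit_nat[of "d X \<otimes> i Y"] assms by simp
  have del2: "(d X \<otimes> i Y) \<otimes> d Z = ((d X \<otimes> i Y) \<otimes> i I) \<cdot> (i (T X Y) \<otimes> d Z)"
    using assms by (simp add: tensor_comp)
  have "r Y \<cdot> ((i Y \<otimes> d Z) \<cdot> (l (T Y Z) \<cdot> ((d X \<otimes> i (T Y Z)) \<cdot> a X Y Z)))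
      = r Y \<cdot> (l (T Y I) \<cdot> ((d X \<otimes> (i Y \<otimes> d Z)) \<cdot> a X Y Z))"
    using assms by (simp add: comp_reduce[OF lunit] comp_reduce[OF del1])
  also have "\<dots> = r Y \<cdot> (l (T Y I) \<cdot> (a I Y I \<cdot> ((d X \<otimes> i Y) \<otimes> d Z)))"
    by (simp only: nat)
  also have "\<dots> = l Y \<cdot> (r (T I Y) \<cdot> ((d X \<otimes> i Y) \<otimes> d Z))"
    using assms by (simp add: comp_reduce[OF lunit_tensor] comp_reduce[OF lunit_runit])
  also have "\<dots> = l Y \<cdot> ((d X \<otimes> i Y) \<cdot> (r (T X Y) \<cdot> (i (T X Y) \<otimes> d Z)))"
    using assms by (simp add: del2 comp_reduce[OF runit])
  finally show ?thesis
    unfolding proj1_def proj2_def using assms by simp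
qed

lemma positive_copy_dilation:
  assumes pos: "positive C" and X: "X \<in> Ob" and dil: "dilation C (cp X) F rh"
  obtains m where "m \<in> Ar" "s m = X" "t m = F" "rh = (cp X \<otimes> m) \<cdot> cp X"
proof -
  have R: "rh \<in> Ar" "s rh = X" "t rh = T (T X X) F" "F \<in> Ob" "proj1 (T X X) F \<cdot> rh = cp X"
    using dil X by (auto simp: dilation_iff)
  define k where "k = proj2 X (T X F) \<cdot> (a X X F \<cdot> rh)"
  define m where "m = proj2 X F \<cdot> k"
  have k: "k \<in> Ar" "s k = X" "t k = T X F"
    using R X unfolding k_def by simp_all
  have m: "m \<in> Ar" "s m = X" "t m = F"
    using R X k unfolding m_def by simp_all
  have "proj1 X (T X F) \<cdot> (a X X F \<cdot> rh) = (proj1 X (T X F) \<cdot> a X X F) \<cdot> rh"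
    using R X by simp
  also have "\<dots> = proj1 X X \<cdot> (proj1 (T X X) F \<cdot> rh)"
    using R X by (simp add: proj1_assoc)
  finally have split_rh: "a X X F \<cdot> rh = (i X \<otimes> k) \<cdot> cp X"
    unfolding k_def using positive_id_dilation_split[OF pos X, of "T X F" "a X X F \<cdot> rh"] R X by simp
  have "proj1 X F \<cdot> k = (proj1 X F \<cdot> (proj2 X (T X F) \<cdot> a X X F)) \<cdot> rh"
    unfolding k_def using R X by simp
  also have "\<dots> = proj2 X X \<cdot> (proj1 (T X X) F \<cdot> rh)"
    using R X by (simp add: proj1_proj2_assoc)
  finally have split_k: "k = (i X \<otimes> m) \<cdot> cp X"
    unfolding m_def using positive_id_dilation_split[OF pos X R(4) k] R X by simp
  have nat: "ai X X F \<cdot> (i X \<otimes> (i X \<otimes> m)) = ((i X \<otimes> i X) \<otimes> m) \<cdot> ai X X X"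
    using assoc_inv_nat[of "i X" "i X" m] X m by simp
  have "rh = ai X X F \<cdot> (a X X F \<cdot> rh)"
    using R X by simp
  also have "\<dots> = ai X X F \<cdot> ((i X \<otimes> (i X \<otimes> m)) \<cdot> ((i X \<otimes> cp X) \<cdot> cp X))"
    using X m k by (simp add: split_rh split_k id_tensor_comp)
  also have "\<dots> = ((i X \<otimes> i X) \<otimes> m) \<cdot> (ai X X X \<cdot> ((i X \<otimes> cp X) \<cdot> cp X))"
    using X m R(4) by (simp add: comp_reduce[OF nat] del: tensor_id)
  also have "\<dots> = (cp X \<otimes> m) \<cdot> cp X"
    using X m by (simp add: coassoc_inv tensor_comp_reduce)
  finally show thesis
    using m that by blast
qed

lemma positive_copy_dil_equal:
  assumes pos: "positive C" and X: "X \<in> Ob"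
    and f: "f1 \<in> Ar" "s f1 = X" "f2 \<in> Ar" "s f2 = X"
    and eq: "(i X \<otimes> f1) \<cdot> cp X = (i X \<otimes> f2) \<cdot> cp X"
  shows "dil_equal C X X (cp X) f1 f2"
  unfolding dil_equal_def
proof (intro allI impI)
  fix F rh
  assume "dilation C (cp X) F rh"
  then obtain m where m: "m \<in> Ar" "s m = X" "t m = F" and rh: "rh = (cp X \<otimes> m) \<cdot> cp X"
    using positive_copy_dilation pos X by blast
  have "F \<in> Ob"
    using m by auto
  have "((i X \<otimes> fj) \<otimes> i F) \<cdot> rh = (((i X \<otimes> fj) \<cdot> cp X) \<otimes> m) \<cdot> cp X"
    if "fj \<in> Ar" "s fj = X" for fj
    using X m that \<open>F \<in> Ob\<close> unfolding rh by (simp add: tensor_comp_reduce)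
  then show "((i X \<otimes> f1) \<otimes> i F) \<cdot> rh = ((i X \<otimes> f2) \<otimes> i F) \<cdot> rh"
    using f eq by simp
qed

lemma positive_copy_initial_dilation:
  assumes pos: "positive C" and X: "X \<in> Ob"
  shows "initial_dilation C (i X) X (cp X)"
  unfolding initial_dilation_def
proof (intro conjI allI impI)
  show "dilation C (i X) X (cp X)"
    using X by (simp add: dilation_iff)
  fix E pi
  assume "dilation C (i X) E pi"
  then have H: "E \<in> Ob" "pi \<in> Ar" "s pi = X" "t pi = T X E" "proj1 X E \<cdot> pi = i X"
    using X by (auto simp: dilation_iff)
  show "\<exists>f\<in>mhom C X E. (i (t (i X)) \<otimes> f) \<cdot> cp X = pi"
    using positive_id_dilation_split[OF pos X H] H X unfolding mhom_def
    by (intro bexI[of _ "proj2 X E \<cdot> pi"]) auto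
  show "\<forall>f1\<in>mhom C X E. \<forall>f2\<in>mhom C X E.
      (i (t (i X)) \<otimes> f1) \<cdot> cp X = pi \<and> (i (t (i X)) \<otimes> f2) \<cdot> cp X = pi \<longrightarrow>
      dil_equal C (t (i X)) X (cp X) f1 f2"
    using positive_copy_dil_equal[OF pos X] X unfolding mhom_def by auto
qed

lemma positive_deterministic_imp_non_creative:
  assumes pos: "positive C" and p: "p \<in> Ar" and det: "deterministic C p"
  shows "non_creative C p"
  unfolding non_creative_def
proof (intro allI impI)
  fix E pi
  assume "dilation C p E pi"
  then have H: "E \<in> Ob" "pi \<in> Ar" "s pi = s p" "t pi = T (t p) E" "proj1 (t p) E \<cdot> pi = p"
    by (simp_all add: dilation_iff)
  let ?h = "proj2 (t p) E \<cdot> pi"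
  let ?io = "(i (s p) \<otimes> ?h) \<cdot> cp (s p)"
  have "dilation C (i (s p)) E ?io"
    using H p proj1_copy_pair[of "i (s p)" ?h "s p"] by (simp add: dilation_iff)
  moreover have "pi = (p \<otimes> i E) \<cdot> ?io"
    using positive_split[OF pos _ H(1,2,4)] p det H by (simp add: tensor_comp_reduce)
  ultimately show "\<exists>io. dilation C (i (s p)) E io \<and> pi = (p \<otimes> i E) \<cdot> io"
    by blast
qed

lemma positive_non_creative_imp_deterministic:
  assumes pos: "positive C" and p: "p \<in> Ar" and nc: "non_creative C p"
  shows "deterministic C p"
proof -
  let ?A = "s p" and ?X = "t p"
  have "dilation C p ?X (cp ?X \<cdot> p)"
    using p by (simp add: dilation_iff comp_reduce[OF proj_copy(1)])
  then obtain io where io: "dilation C (i ?A) ?X io" and copy_p: "cp ?X \<cdot> p = (p \<otimes> i ?X) \<cdot> io"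
    using nc unfolding non_creative_def by blast
  have H: "io \<in> Ar" "s io = ?A" "t io = T ?A ?X" "proj1 ?A ?X \<cdot> io = i ?A"
    using io p by (simp_all add: dilation_iff)
  define h where "h = proj2 ?A ?X \<cdot> io"
  have h: "h \<in> Ar" "s h = ?A" "t h = ?X"
    using p H unfolding h_def by simp_all
  have "io = (i ?A \<otimes> h) \<cdot> cp ?A"
    unfolding h_def using positive_id_dilation_split[OF pos _ _ H] p by simp
  then have copy_p_h: "cp ?X \<cdot> p = (p \<otimes> h) \<cdot> cp ?A"
    using copy_p p h by (simp add: tensor_comp_reduce)
  moreover have "p = proj2 ?X ?X \<cdot> (cp ?X \<cdot> p)"
    using p by (simp add: comp_reduce[OF proj_copy(2)])
  ultimately have "p = h"
    using proj2_copy_pair[of p h ?A] p h by simp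
  with copy_p_h show ?thesis
    unfolding deterministic_def by simp
qed

lemma copy_initial_non_creative_imp_positive:
  assumes init: "\<forall>X\<in>Ob. initial_dilation C (i X) X (cp X)"
    and nc: "\<forall>p\<in>Ar. deterministic C p \<longrightarrow> non_creative C p"
  shows "positive C"
  unfolding positive_def
proof (intro ballI impI)
  fix f g
  assume f: "f \<in> Ar" and g: "g \<in> Ar" and fg: "t f = s g" and det: "deterministic C (g \<cdot> f)"
  obtain X Y Z where XYZ: "s f = X" "t f = Y" "s g = Y" "t g = Z"
    using fg by metis
  have ob: "X \<in> Ob" "Y \<in> Ob" "Z \<in> Ob"
    using f g XYZ by (metis ar_ob)+
  note facts = f g XYZ ob
  let ?pi = "(g \<otimes> i Y) \<cdot> (cp Y \<cdot> f)"
  have "dilation C (g \<cdot> f) Y ?pi"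
    using comp_reduce[OF proj1_copy_pair[of g "i Y" Y], of f] facts by (simp add: dilation_iff)
  moreover have "non_creative C (g \<cdot> f)"
    using nc det f g fg by simp
  ultimately obtain io where io: "dilation C (i (s (g \<cdot> f))) Y io"
    and pi_io: "?pi = ((g \<cdot> f) \<otimes> i Y) \<cdot> io"
    unfolding non_creative_def by blast
  from io have "dilation C (i X) Y io"
    using facts by simp
  then obtain h where h: "h \<in> Ar" "s h = X" "t h = Y" and io_h: "(i X \<otimes> h) \<cdot> cp X = io"
    using init ob unfolding initial_dilation_def mhom_def by fastforce
  have pi_h: "?pi = ((g \<cdot> f) \<otimes> h) \<cdot> cp X"
    unfolding pi_io io_h[symmetric] using facts h by (simp add: tensor_comp_reduce)
  have "f = proj2 Z Y \<cdot> ?pi"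
    using comp_reduce[OF proj2_copy_pair[of g "i Y" Y], of f] facts by simp
  also have "\<dots> = h"
    using pi_h proj2_copy_pair[of "g \<cdot> f" h X] facts h by simp
  finally have "f = h" .
  have "(i Y \<otimes> g) \<cdot> (cp Y \<cdot> f) = sg Z Y \<cdot> ?pi"
    using comp_reduce[OF sym_copy_pair[of g "i Y" Y], of f] facts by simp
  also have "\<dots> = (f \<otimes> (g \<cdot> f)) \<cdot> cp X"
    using pi_h \<open>f = h\<close> sym_copy_pair[of "g \<cdot> f" f X] facts by simp
  finally show "(i (t f) \<otimes> g) \<cdot> (cp (t f) \<cdot> f) = (f \<otimes> (g \<cdot> f)) \<cdot> cp (s f)"
    using XYZ by simp
qed

theorem positive_iff_copy_initial_and_deterministic_eq_non_creative:
  "positive C \<longleftrightarrow>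
     (\<forall>X\<in>Ob. initial_dilation C (i X) X (cp X)) \<and> (\<forall>p\<in>Ar. deterministic C p \<longleftrightarrow> non_creative C p)"
  using positive_copy_initial_dilation positive_deterministic_imp_non_creative
    positive_non_creative_imp_deterministic copy_initial_non_creative_imp_positive
  by blast

end


theorem corollary4p16:
  fixes C :: "('o, 'm) mcat"
  assumes "is_markov_category C"
  shows "positive C \<longleftrightarrow>
           (\<forall>X\<in>mc_Ob C. initial_dilation C (mc_id C X) X (mc_copy C X)) \<and>
           (\<forall>p\<in>mc_Ar C. deterministic C p \<longleftrightarrow> non_creative C p)"
proof -
  interpret markov_category C
    using assms by (rule markov_category.intro)
  show ?thesis
    by (rule positive_iff_copy_initial_and_deterministic_eq_non_creative)
qed

end
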